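(* Let $i\in\{0,\dots,t-1\}$. There exists a subset $\mathcal X^*\subseteq\mathcal X$ of encoding items with total weight $w(\mathcal X^* )\le(3t-3i-2)\cdot B$ and total profit $p(\mathcal X^* )\ge(3t-3i-2)\cdot B+\left(\binom{t}{2}-\binom{i+1}{2}+\frac{i}{3}\right)\cdot 9nB$ if and only if the instance $\mathcal A_i$ has a solution, i.e., there exists $\mathcal A_i^*\subseteq\mathcal A_i$ with $|\mathcal A_i^*|=n$ and $\sum_{a\in\mathcal A_i^*}a=B_n$.
   Context: Let $n\ge1$, $B_n=\sum_{j=1}^{3n}(3n+1)^j$ and $\widetilde{\mathcal A}_n=\{(3n+1)^{j_1}+(3n+1)^{j_2}+(3n+1)^{j_3}: j_1,j_2,j_3\in\{1,\dots,3n\}\}$. Let $t$ be a power of two and, for each $i\in\{0,\dots,t-1\}$, let $\mathcal A_i=\{a^i_1,\dots,a^i_{3n}\}$ be a set of $3n$ integers from $\widetilde{\mathcal A}_n$ with $\sum_{j=1}^{3n}a^i_j=3B_n$. Let $X=3tnB_n$ and $B=B_n+nX$. For each $i\in\{0,\dots,t-1\}$ and $j\in\{1,\dots,3n\}$ there is an encoding item $x^i_j$ with weight $w(x^i_j)=X+a^i_j$ and profit $p(x^i_j)=X+a^i_j+3iB$; $\mathcal X$ is the set of all encoding items. For a set $\mathcal S$ of items, $w(\mathcal S)=\sum_{x\in\mathcal S}w(x)$ and $p(\mathcal S)=\sum_{x\in\mathcal S}p(x)$. *)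

theory Defs
  imports Complex_Main
begin

definition Bn :: "nat \<Rightarrow> int" where
  "Bn n = (\<Sum>j=1..3*n. (3 * int n + 1) ^ j)"

definition Atilde :: "nat \<Rightarrow> int set" where
  "Atilde n = {(3 * int n + 1) ^ j1 + (3 * int n + 1) ^ j2 + (3 * int n + 1) ^ j3
               | j1 j2 j3. j1 \<in> {1..3*n} \<and> j2 \<in> {1..3*n} \<and> j3 \<in> {1..3*n}}"

definition bigX :: "nat \<Rightarrow> nat \<Rightarrow> int" where
  "bigX n t = 3 * int t * int n * Bn n"

definition bigB :: "nat \<Rightarrow> nat \<Rightarrow> int" where
  "bigB n t = Bn n + int n * bigX n t"

text \<open>Encoding item x^i_j is represented by the index pair (i,j).\<close>
definition items :: "nat \<Rightarrow> nat \<Rightarrow> (nat \<times> nat) set" where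
  "items n t = {..<t} \<times> {1..3*n}"

definition wt :: "nat \<Rightarrow> nat \<Rightarrow> (nat \<Rightarrow> nat \<Rightarrow> int) \<Rightarrow> nat \<times> nat \<Rightarrow> int" where
  "wt n t a x = bigX n t + a (fst x) (snd x)"

definition pr :: "nat \<Rightarrow> nat \<Rightarrow> (nat \<Rightarrow> nat \<Rightarrow> int) \<Rightarrow> nat \<times> nat \<Rightarrow> int" where
  "pr n t a x = bigX n t + a (fst x) (snd x) + 3 * int (fst x) * bigB n t"

end

theory Submission
  imports Defs
begin

(* Every item weighs bigX plus its a-value, and its profit exceeds its weight by 3kB, where k is
   the index of its instance. Since bigX dominates every sum of a-values, the weight budget
   (3t - 3i - 2)B admits at most (3t - 3i - 2)n items, and beyond the weight the profit only
   rewards the index sum. With c_k items taken from instance k (0 <= c_k <= 3n), an exchange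
   argument on sum_k (k - i) c_k shows that under this cap the index sum is at most its value
   for all items of the instances k > i plus n items of instance i, and that attaining it forces
   every instance k > i to be taken completely and every k < i not at all. The profit bound
   demands this maximum, so the weight bound becomes tight, which leaves exactly n items of
   instance i with a-values summing to B_n; conversely a solution of instance i yields such a
   selection meeting both bounds with equality. *)

lemma sum_lessThan_split_at:
  fixes f :: "nat \<Rightarrow> 'a::comm_monoid_add"
  assumes "i < t"
  shows "(\<Sum>k<t. f k) = (\<Sum>k<i. f k) + f i + (\<Sum>k\<in>{i<..<t}. f k)"
proof -
  have split: "{..<t} = {..<i} \<union> insert i {i<..<t}" using assms by auto
  have "(\<Sum>k<t. f k) = (\<Sum>k<i. f k) + (\<Sum>k\<in>insert i {i<..<t}. f k)"
    unfolding split by (rule sum.union_disjoint) auto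
  then show ?thesis by (simp add: add.assoc)
qed

lemma sum_greaterThanLessThan_eq_choose_two:
  assumes "i < t"
  shows "(\<Sum>k\<in>{i<..<t}. int k) = int (t choose 2) - int (Suc i choose 2)"
  using assms
proof (induction t)
  case 0 then show ?case by simp
next
  case (Suc t)
  show ?case
  proof (cases "i = t")
    case False
    then have "{i<..<Suc t} = insert t {i<..<t}" using Suc.prems by auto
    then show ?thesis using Suc False by (simp add: numeral_2_eq_2)
  next
    case True
    then have "{i<..<Suc t} = {}" by auto
    with True show ?thesis by simp
  qed
qed

lemma mult_add_le_imp_le:
  fixes m m' X r r' :: int
  assumes "m * X + r \<le> m' * X + r'" and "r' - r < X" and "0 < X"
  shows "m \<le> m'"
proof (rule ccontr)
  assume "\<not> m \<le> m'"
  then have "X \<le> (m - m') * X" using \<open>0 < X\<close> by simp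
  then show False using assms(1,2) by (simp add: algebra_simps)
qed

lemma sum_offset_weighted_le:
  fixes c :: "nat \<Rightarrow> int"
  assumes "\<And>k. k < t \<Longrightarrow> 0 \<le> c k \<and> c k \<le> N"
  shows "(\<Sum>k<t. (int k - int i) * c k) \<le> N * (\<Sum>k\<in>{i<..<t}. int k - int i)"
    and "(\<Sum>k<t. (int k - int i) * c k) = N * (\<Sum>k\<in>{i<..<t}. int k - int i)
          \<Longrightarrow> k < t \<Longrightarrow> k \<noteq> i \<Longrightarrow> c k = (if i < k then N else 0)"
proof -
  define d where "d k = (int k - int i) * ((if i < k then N else 0) - c k)" for k
  have d_nonneg: "0 \<le> d k" if "k < t" for k
    using assms[OF that] by (auto simp: d_def zero_le_mult_iff)
  have "{..<t} \<inter> Collect ((<) i) = {i<..<t}" by auto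
  then have "N * (\<Sum>k\<in>{i<..<t}. int k - int i) = (\<Sum>k<t. if i < k then (int k - int i) * N else 0)"
    by (simp add: sum.If_cases sum_distrib_left mult.commute)
  moreover have "d k = (if i < k then (int k - int i) * N else 0) - (int k - int i) * c k" for k
    by (simp add: d_def right_diff_distrib)
  ultimately have gap: "N * (\<Sum>k\<in>{i<..<t}. int k - int i) - (\<Sum>k<t. (int k - int i) * c k) = (\<Sum>k<t. d k)"
    by (simp add: sum_subtractf)
  then show "(\<Sum>k<t. (int k - int i) * c k) \<le> N * (\<Sum>k\<in>{i<..<t}. int k - int i)"
    using sum_nonneg[of "{..<t}" d] d_nonneg by simp
  assume "(\<Sum>k<t. (int k - int i) * c k) = N * (\<Sum>k\<in>{i<..<t}. int k - int i)" "k < t" "k \<noteq> i"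
  then have "d k = 0"
    using gap sum_nonneg_eq_0_iff[of "{..<t}" d] d_nonneg by simp
  then show "c k = (if i < k then N else 0)" using \<open>k \<noteq> i\<close> by (simp add: d_def)
qed

lemma ex_subset_image_iff:
  assumes "inj_on f U"
  shows "(\<exists>As \<subseteq> f ` U. card As = m \<and> \<Sum>As = s) \<longleftrightarrow> (\<exists>J \<subseteq> U. card J = m \<and> (\<Sum>j\<in>J. f j) = s)"
proof
  assume "\<exists>As \<subseteq> f ` U. card As = m \<and> \<Sum>As = s"
  then obtain J where "J \<subseteq> U" "card (f ` J) = m" "\<Sum>(f ` J) = s"
    by (auto simp: subset_image_iff)
  moreover have "inj_on f J" using assms \<open>J \<subseteq> U\<close> by (rule inj_on_subset)
  ultimately show "\<exists>J \<subseteq> U. card J = m \<and> (\<Sum>j\<in>J. f j) = s"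
    by (auto simp: card_image sum.reindex)
next
  assume "\<exists>J \<subseteq> U. card J = m \<and> (\<Sum>j\<in>J. f j) = s"
  then obtain J where "J \<subseteq> U" "card J = m" "(\<Sum>j\<in>J. f j) = s" by blast
  moreover have "inj_on f J" using assms \<open>J \<subseteq> U\<close> by (rule inj_on_subset)
  ultimately show "\<exists>As \<subseteq> f ` U. card As = m \<and> \<Sum>As = s"
    by (intro exI[of _ "f ` J"]) (auto simp: card_image sum.reindex)
qed

lemma Atilde_nonneg: "x \<in> Atilde n \<Longrightarrow> 0 \<le> x"
  unfolding Atilde_def by auto

lemma sum_wt_Sigma:
  assumes "\<And>k. k < t \<Longrightarrow> finite (F k)"
  shows "(\<Sum>x\<in>Sigma {..<t} F. wt n t a x)
           = (\<Sum>k<t. int (card (F k))) * bigX n t + (\<Sum>k<t. \<Sum>j\<in>F k. a k j)"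
proof -
  have "(\<Sum>x\<in>Sigma {..<t} F. wt n t a x) = (\<Sum>k<t. \<Sum>j\<in>F k. bigX n t + a k j)"
    using assms sum.Sigma[of "{..<t}" F "\<lambda>k j. wt n t a (k, j)"] by (simp add: case_prod_beta wt_def)
  then show ?thesis by (simp add: sum.distrib sum_distrib_right)
qed

lemma sum_pr_Sigma:
  assumes "\<And>k. k < t \<Longrightarrow> finite (F k)"
  shows "(\<Sum>x\<in>Sigma {..<t} F. pr n t a x)
           = (\<Sum>x\<in>Sigma {..<t} F. wt n t a x) + 3 * bigB n t * (\<Sum>k<t. int k * int (card (F k)))"
proof -
  have "(\<Sum>x\<in>Sigma {..<t} F. pr n t a x)
          = (\<Sum>x\<in>Sigma {..<t} F. wt n t a x) + 3 * bigB n t * (\<Sum>x\<in>Sigma {..<t} F. int (fst x))"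
    by (simp add: pr_def wt_def sum.distrib sum_distrib_left algebra_simps)
  also have "(\<Sum>x\<in>Sigma {..<t} F. int (fst x)) = (\<Sum>k<t. int k * int (card (F k)))"
    using assms sum.Sigma[of "{..<t}" F "\<lambda>k j. int k"] by (simp add: case_prod_beta mult.commute)
  finally show ?thesis .
qed

lemma items_eq_Sigma_rows:
  assumes "S \<subseteq> items n t"
  shows "S = Sigma {..<t} (\<lambda>k. {j. (k, j) \<in> S})" and "\<And>k. {j. (k, j) \<in> S} \<subseteq> {1..3*n}"
  using assms by (auto simp: items_def)

definition canonical_rows :: "nat \<Rightarrow> nat \<Rightarrow> nat set \<Rightarrow> nat \<Rightarrow> nat set" where
  "canonical_rows n i J k = (if k < i then {} else if k = i then J else {1..3*n})"

(* The index sum of the items in Sigma {..<t} (canonical_rows n i J) when card J = n. *)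
definition canonical_index_sum :: "nat \<Rightarrow> nat \<Rightarrow> nat \<Rightarrow> int" where
  "canonical_index_sum n t i = int n * int i + 3 * int n * (\<Sum>k\<in>{i<..<t}. int k)"

lemma row_eq_canonical_row:
  assumes "R \<subseteq> {1..3*n}" and "k \<noteq> i"
    and "int (card R) = (if i < k then 3 * int n else 0)"
  shows "R = canonical_rows n i J k"
proof (cases "i < k")
  case True
  then have "card R = card {1..3*n}" using assms(3) by simp
  then show ?thesis using True assms(1) by (simp add: card_subset_eq canonical_rows_def)
next
  case False
  moreover have "finite R" using assms(1) finite_subset by blast
  ultimately show ?thesis using assms(2,3) by (simp add: canonical_rows_def)
qed

lemma index_sum_exchange:
  fixes n t i :: nat and F :: "nat \<Rightarrow> nat set"
  defines "K \<equiv> 3 * int t - 3 * int i - 2"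
  assumes "i < t" and rows: "\<And>k. k < t \<Longrightarrow> F k \<subseteq> {1..3*n}"
  shows "(\<Sum>k<t. int k * int (card (F k))) - int i * (\<Sum>k<t. int (card (F k)))
           \<le> canonical_index_sum n t i - int i * (K * int n)"
    and "(\<Sum>k<t. int k * int (card (F k))) - int i * (\<Sum>k<t. int (card (F k)))
           = canonical_index_sum n t i - int i * (K * int n)
         \<Longrightarrow> k < t \<Longrightarrow> k \<noteq> i \<Longrightarrow> F k = canonical_rows n i J k"
proof -
  have card_bounds: "0 \<le> int (card (F k)) \<and> int (card (F k)) \<le> 3 * int n" if "k < t" for k
    using card_mono[OF _ rows[OF that]] by simp
  have lhs: "(\<Sum>k<t. int k * int (card (F k))) - int i * (\<Sum>k<t. int (card (F k)))
               = (\<Sum>k<t. (int k - int i) * int (card (F k)))"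
    by (simp add: sum_subtractf sum_distrib_left algebra_simps)
  have rhs: "canonical_index_sum n t i - int i * (K * int n) = 3 * int n * (\<Sum>k\<in>{i<..<t}. int k - int i)"
    using \<open>i < t\<close> by (simp add: canonical_index_sum_def K_def sum_subtractf algebra_simps)
  show "(\<Sum>k<t. int k * int (card (F k))) - int i * (\<Sum>k<t. int (card (F k)))
          \<le> canonical_index_sum n t i - int i * (K * int n)"
    unfolding lhs rhs
    by (rule sum_offset_weighted_le(1)[where c = "\<lambda>k. int (card (F k))", OF card_bounds])
  assume "(\<Sum>k<t. int k * int (card (F k))) - int i * (\<Sum>k<t. int (card (F k)))
            = canonical_index_sum n t i - int i * (K * int n)" "k < t" "k \<noteq> i"
  then have "int (card (F k)) = (if i < k then 3 * int n else 0)"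
    using sum_offset_weighted_le(2)[where c = "\<lambda>k. int (card (F k))", OF card_bounds]
    unfolding lhs rhs by blast
  then show "F k = canonical_rows n i J k"
    using rows[OF \<open>k < t\<close>] \<open>k \<noteq> i\<close> by (intro row_eq_canonical_row)
qed

lemma canonical_index_sum_eq_choose_two:
  assumes "i < t"
  shows "(real (t choose 2) - real ((i + 1) choose 2) + real i / 3) * 9 * real n * real_of_int B
           = real_of_int (3 * canonical_index_sum n t i * B)"
proof -
  have "(real (t choose 2) - real ((i + 1) choose 2) + real i / 3) * 9 * real n * real_of_int B
          = real_of_int ((9 * int n * (int (t choose 2) - int ((i + 1) choose 2)) + 3 * int n * int i) * B)"
    by (simp add: field_simps)
  also have "(9 * int n * (int (t choose 2) - int ((i + 1) choose 2)) + 3 * int n * int i) * B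
               = 3 * canonical_index_sum n t i * B"
    unfolding canonical_index_sum_def sum_greaterThanLessThan_eq_choose_two[OF assms]
    by (simp add: algebra_simps)
  finally show ?thesis .
qed

locale encoded_instances =
  fixes n t :: nat and a :: "nat \<Rightarrow> nat \<Rightarrow> int"
  assumes n_pos: "1 \<le> n"
    and entries_nonneg: "\<And>k j. k < t \<Longrightarrow> j \<in> {1..3*n} \<Longrightarrow> 0 \<le> a k j"
    and row_sum: "\<And>k. k < t \<Longrightarrow> (\<Sum>j=1..3*n. a k j) = 3 * Bn n"
begin

lemma Bn_pos: "0 < Bn n"
  unfolding Bn_def using n_pos by (intro sum_pos) auto

lemma canonical_rows_sums:
  assumes "i < t" and "J \<subseteq> {1..3*n}"
  shows "(\<Sum>k<t. int (card (canonical_rows n i J k))) = int (card J) + 3 * int n * int (t - Suc i)"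
    and "(\<Sum>k<t. \<Sum>j\<in>canonical_rows n i J k. a k j) = (\<Sum>j\<in>J. a i j) + 3 * Bn n * int (t - Suc i)"
    and "(\<Sum>k<t. int k * int (card (canonical_rows n i J k)))
           = int i * int (card J) + 3 * int n * (\<Sum>k\<in>{i<..<t}. int k)"
proof -
  have "(\<Sum>k\<in>{i<..<t}. \<Sum>j\<in>{1..3*n}. a k j) = (\<Sum>k\<in>{i<..<t}. 3 * Bn n)"
    by (intro sum.cong refl row_sum) auto
  then show "(\<Sum>k<t. int (card (canonical_rows n i J k))) = int (card J) + 3 * int n * int (t - Suc i)"
    and "(\<Sum>k<t. \<Sum>j\<in>canonical_rows n i J k. a k j) = (\<Sum>j\<in>J. a i j) + 3 * Bn n * int (t - Suc i)"
    and "(\<Sum>k<t. int k * int (card (canonical_rows n i J k)))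
           = int i * int (card J) + 3 * int n * (\<Sum>k\<in>{i<..<t}. int k)"
    by (simp_all add: sum_lessThan_split_at[OF assms(1)] canonical_rows_def sum_distrib_right mult.commute)
qed

lemma canonical_selection:
  assumes "i < t" and "J \<subseteq> {1..3*n}" and "card J = n" and "(\<Sum>j\<in>J. a i j) = Bn n"
  defines "S \<equiv> Sigma {..<t} (canonical_rows n i J)"
  shows "(\<Sum>x\<in>S. wt n t a x) = (3 * int t - 3 * int i - 2) * bigB n t"
    and "(\<Sum>x\<in>S. pr n t a x)
           = (3 * int t - 3 * int i - 2) * bigB n t + 3 * canonical_index_sum n t i * bigB n t"
proof -
  have fin: "finite (canonical_rows n i J k)" for k
    using assms(2) finite_subset by (auto simp: canonical_rows_def)
  show w: "(\<Sum>x\<in>S. wt n t a x) = (3 * int t - 3 * int i - 2) * bigB n t"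
    unfolding S_def sum_wt_Sigma[OF fin] canonical_rows_sums[OF assms(1,2)] assms(3,4)
    using assms(1) by (simp add: bigB_def algebra_simps)
  show "(\<Sum>x\<in>S. pr n t a x)
          = (3 * int t - 3 * int i - 2) * bigB n t + 3 * canonical_index_sum n t i * bigB n t"
    unfolding S_def sum_pr_Sigma[OF fin] w[unfolded S_def] canonical_rows_sums[OF assms(1,2)] assms(3)
    by (simp add: canonical_index_sum_def algebra_simps)
qed

lemma bigX_ge: "3 * int t * Bn n \<le> bigX n t"
proof -
  have "3 * int t * Bn n * 1 \<le> 3 * int t * Bn n * int n"
    using n_pos Bn_pos by (intro mult_left_mono) auto
  then show ?thesis by (simp add: bigX_def ac_simps)
qed

lemma sum_selected_values_bounds:
  assumes "\<And>k. k < t \<Longrightarrow> F k \<subseteq> {1..3*n}"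
  shows "0 \<le> (\<Sum>k<t. \<Sum>j\<in>F k. a k j)" and "(\<Sum>k<t. \<Sum>j\<in>F k. a k j) \<le> 3 * int t * Bn n"
proof -
  show "0 \<le> (\<Sum>k<t. \<Sum>j\<in>F k. a k j)"
    using assms entries_nonneg by (force intro!: sum_nonneg)
  have "(\<Sum>k<t. \<Sum>j\<in>F k. a k j) \<le> (\<Sum>k<t. \<Sum>j=1..3*n. a k j)"
    using assms entries_nonneg by (force intro!: sum_mono sum_mono2)
  also have "\<dots> = (\<Sum>k<t. 3 * Bn n)" by (intro sum.cong refl row_sum) auto
  finally show "(\<Sum>k<t. \<Sum>j\<in>F k. a k j) \<le> 3 * int t * Bn n" by simp
qed

(* bigX exceeds every total of a-values, so it acts as a radix: a weight is compared by its item
   count first and by its a-values only on ties. *)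
lemma selection_weight_digits:
  fixes i :: nat and F :: "nat \<Rightarrow> nat set"
  defines "K \<equiv> 3 * int t - 3 * int i - 2"
  assumes "i < t" and rows: "\<And>k. k < t \<Longrightarrow> F k \<subseteq> {1..3*n}"
  shows "(\<Sum>x\<in>Sigma {..<t} F. wt n t a x) \<le> K * bigB n t \<Longrightarrow> (\<Sum>k<t. int (card (F k))) \<le> K * int n"
    and "(\<Sum>x\<in>Sigma {..<t} F. wt n t a x) = K * bigB n t
           \<Longrightarrow> (\<Sum>k<t. int (card (F k))) = K * int n \<and> (\<Sum>k<t. \<Sum>j\<in>F k. a k j) = K * Bn n"
proof -
  define X m A where "X = bigX n t" and "m = (\<Sum>k<t. int (card (F k)))"
    and "A = (\<Sum>k<t. \<Sum>j\<in>F k. a k j)"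
  have fin: "finite (F k)" if "k < t" for k using rows[OF that] finite_subset by blast
  have wS: "(\<Sum>x\<in>Sigma {..<t} F. wt n t a x) = m * X + A"
    using sum_wt_Sigma[OF fin] by (simp add: m_def A_def X_def)
  have KB: "K * bigB n t = (K * int n) * X + K * Bn n"
    by (simp add: X_def bigB_def algebra_simps)
  have A_bounds: "0 \<le> A" "A \<le> 3 * int t * Bn n"
    unfolding A_def using sum_selected_values_bounds[of F, OF rows] by blast+
  have KBn_pos: "0 < K * Bn n" using \<open>i < t\<close> Bn_pos by (simp add: K_def)
  have "K * Bn n < 3 * int t * Bn n" using Bn_pos by (simp add: K_def)
  then have KBn_less: "K * Bn n < X" using bigX_ge by (simp add: X_def)
  have X_pos: "0 < X" using KBn_pos KBn_less by simp
  show m_le: "m \<le> K * int n" if "(\<Sum>x\<in>Sigma {..<t} F. wt n t a x) \<le> K * bigB n t"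
  proof (rule mult_add_le_imp_le[OF _ _ X_pos])
    show "m * X + A \<le> K * int n * X + K * Bn n" using that wS KB by simp
    show "K * Bn n - A < X" using A_bounds KBn_less by simp
  qed
  assume w: "(\<Sum>x\<in>Sigma {..<t} F. wt n t a x) = K * bigB n t"
  have "K * int n \<le> m"
  proof (rule mult_add_le_imp_le[OF _ _ X_pos])
    show "K * int n * X + K * Bn n \<le> m * X + A" using w wS KB by simp
    show "A - K * Bn n < X" using A_bounds bigX_ge KBn_pos by (simp add: X_def)
  qed
  with m_le w have "m = K * int n" by simp
  with w wS KB show "m = K * int n \<and> A = K * Bn n" by simp
qed

lemma selection_totals_forced:
  fixes i :: nat and F :: "nat \<Rightarrow> nat set"
  defines "K \<equiv> 3 * int t - 3 * int i - 2"
  assumes "i < t" and rows: "\<And>k. k < t \<Longrightarrow> F k \<subseteq> {1..3*n}"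
    and w: "(\<Sum>x\<in>Sigma {..<t} F. wt n t a x) \<le> K * bigB n t"
    and p: "K * bigB n t + 3 * canonical_index_sum n t i * bigB n t \<le> (\<Sum>x\<in>Sigma {..<t} F. pr n t a x)"
  shows "(\<Sum>k<t. int (card (F k))) = K * int n"
    and "(\<Sum>k<t. \<Sum>j\<in>F k. a k j) = K * Bn n"
    and "(\<Sum>k<t. int k * int (card (F k))) - int i * (\<Sum>k<t. int (card (F k)))
           = canonical_index_sum n t i - int i * (K * int n)"
proof -
  define B D m I where "B = bigB n t" and "D = canonical_index_sum n t i"
    and "m = (\<Sum>k<t. int (card (F k)))" and "I = (\<Sum>k<t. int k * int (card (F k)))"
  have fin: "finite (F k)" if "k < t" for k using rows[OF that] finite_subset by blast
  have pS: "(\<Sum>x\<in>Sigma {..<t} F. pr n t a x) = (\<Sum>x\<in>Sigma {..<t} F. wt n t a x) + 3 * B * I"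
    using sum_pr_Sigma[OF fin] by (simp add: I_def B_def)
  have "0 < B"
    using Bn_pos by (simp add: B_def bigB_def bigX_def add_pos_nonneg)
  moreover have "B * D \<le> B * I" using w p pS by (simp add: B_def D_def algebra_simps)
  ultimately have I_ge: "D \<le> I" by simp
  have "I - int i * m \<le> D - int i * (K * int n)"
    using index_sum_exchange(1)[OF \<open>i < t\<close> rows] by (simp add: I_def m_def D_def K_def)
  moreover have "m \<le> K * int n"
    using selection_weight_digits(1)[OF \<open>i < t\<close> rows w[unfolded K_def]] by (simp add: m_def K_def)
  then have "int i * m \<le> int i * (K * int n)" by (simp add: mult_left_mono)
  ultimately have "I - int i * m = D - int i * (K * int n)" and "I = D" using I_ge by linarith+
  then show "(\<Sum>k<t. int k * int (card (F k))) - int i * (\<Sum>k<t. int (card (F k)))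
               = canonical_index_sum n t i - int i * (K * int n)"
    by (simp add: I_def m_def D_def)
  have "(\<Sum>x\<in>Sigma {..<t} F. wt n t a x) = K * bigB n t"
    using \<open>I = D\<close> w p pS by (simp add: B_def D_def algebra_simps)
  then show "(\<Sum>k<t. int (card (F k))) = K * int n" and "(\<Sum>k<t. \<Sum>j\<in>F k. a k j) = K * Bn n"
    using selection_weight_digits(2)[OF \<open>i < t\<close> rows] by (simp_all add: K_def)
qed

lemma solution_from_selection:
  assumes "i < t" and rows: "\<And>k. k < t \<Longrightarrow> F k \<subseteq> {1..3*n}"
    and "(\<Sum>x\<in>Sigma {..<t} F. wt n t a x) \<le> (3 * int t - 3 * int i - 2) * bigB n t"
    and "(3 * int t - 3 * int i - 2) * bigB n t + 3 * canonical_index_sum n t i * bigB n t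
           \<le> (\<Sum>x\<in>Sigma {..<t} F. pr n t a x)"
  shows "card (F i) = n" and "(\<Sum>j\<in>F i. a i j) = Bn n"
proof -
  note totals = selection_totals_forced[OF assms]
  have canonical: "F k = canonical_rows n i (F i) k" if "k < t" for k
  proof (cases "k = i")
    case False
    then show ?thesis using index_sum_exchange(2)[OF \<open>i < t\<close> rows totals(3) that] by blast
  qed (simp add: canonical_rows_def)
  have "(\<Sum>k<t. int (card (F k))) = (\<Sum>k<t. int (card (canonical_rows n i (F i) k)))"
    and "(\<Sum>k<t. \<Sum>j\<in>F k. a k j) = (\<Sum>k<t. \<Sum>j\<in>canonical_rows n i (F i) k. a k j)"
    using canonical by (auto intro!: sum.cong)
  then have "(3 * int t - 3 * int i - 2) * int n = int (card (F i)) + 3 * int n * int (t - Suc i)"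
    and "(3 * int t - 3 * int i - 2) * Bn n = (\<Sum>j\<in>F i. a i j) + 3 * Bn n * int (t - Suc i)"
    using totals(1,2) canonical_rows_sums[OF \<open>i < t\<close> rows[OF \<open>i < t\<close>]] by simp_all
  then show "card (F i) = n" and "(\<Sum>j\<in>F i. a i j) = Bn n"
    using \<open>i < t\<close> by (simp_all add: algebra_simps)
qed

lemma selection_iff_solution:
  assumes "i < t"
  shows "(\<exists>S \<subseteq> items n t.
            (\<Sum>x\<in>S. wt n t a x) \<le> (3 * int t - 3 * int i - 2) * bigB n t \<and>
            (3 * int t - 3 * int i - 2) * bigB n t + 3 * canonical_index_sum n t i * bigB n t
              \<le> (\<Sum>x\<in>S. pr n t a x))
         \<longleftrightarrow> (\<exists>J \<subseteq> {1..3*n}. card J = n \<and> (\<Sum>j\<in>J. a i j) = Bn n)"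
    (is "(\<exists>S \<subseteq> items n t. ?fits S) \<longleftrightarrow> ?solvable")
proof
  assume "\<exists>S \<subseteq> items n t. ?fits S"
  then obtain S where "S \<subseteq> items n t" and "?fits S" by blast
  with items_eq_Sigma_rows[OF \<open>S \<subseteq> items n t\<close>] show ?solvable
    using solution_from_selection[OF \<open>i < t\<close>] by metis
next
  assume ?solvable
  then obtain J where "J \<subseteq> {1..3*n}" "card J = n" "(\<Sum>j\<in>J. a i j) = Bn n" by blast
  moreover have "Sigma {..<t} (canonical_rows n i J) \<subseteq> items n t"
    using \<open>J \<subseteq> {1..3*n}\<close> by (auto simp: items_def canonical_rows_def split: if_splits)
  ultimately show "\<exists>S \<subseteq> items n t. ?fits S"
    using canonical_selection[OF \<open>i < t\<close>] by (metis order_refl)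
qed

end

theorem lemma3:
  fixes n t i :: nat and a :: "nat \<Rightarrow> nat \<Rightarrow> int"
  assumes "n \<ge> 1"
    and "\<exists>k. t = 2 ^ k"
    and "\<forall>i'<t. inj_on (a i') {1..3*n}"
    and "\<forall>i'<t. a i' ` {1..3*n} \<subseteq> Atilde n"
    and "\<forall>i'<t. (\<Sum>j=1..3*n. a i' j) = 3 * Bn n"
    and "i < t"
  shows "(\<exists>S \<subseteq> items n t.
            (\<Sum>x\<in>S. wt n t a x) \<le> (3 * int t - 3 * int i - 2) * bigB n t \<and>
            real_of_int (\<Sum>x\<in>S. pr n t a x) \<ge>
              real_of_int ((3 * int t - 3 * int i - 2) * bigB n t)
              + (real (t choose 2) - real ((i + 1) choose 2) + real i / 3) * 9 * real n * real_of_int (bigB n t))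
         \<longleftrightarrow>
         (\<exists>As \<subseteq> a i ` {1..3*n}. card As = n \<and> \<Sum>As = Bn n)"
proof -
  interpret encoded_instances n t a
    using assms(1,4,5) Atilde_nonneg by unfold_locales blast+
  have profit: "real_of_int p \<ge> real_of_int ((3 * int t - 3 * int i - 2) * bigB n t)
        + (real (t choose 2) - real ((i + 1) choose 2) + real i / 3) * 9 * real n * real_of_int (bigB n t)
      \<longleftrightarrow> (3 * int t - 3 * int i - 2) * bigB n t + 3 * canonical_index_sum n t i * bigB n t \<le> p" for p
    unfolding canonical_index_sum_eq_choose_two[OF assms(6)] by (simp only: of_int_add[symmetric] of_int_le_iff)
  have "inj_on (a i) {1..3*n}" using assms(3,6) by blast
  show ?thesis
    unfolding profit ex_subset_image_iff[OF \<open>inj_on (a i) {1..3*n}\<close>] by (rule selection_iff_solution[OF assms(6)])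
qed

end
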